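(* The free semigroup of rank 1 with a zero adjoined, i.e. the semigroup with presentation $\langle a,b\mid b^2=b,\ ab=ba=b\rangle$, is not isomorphic to any automaton semigroup.
   Context: A synchronous automaton is $(Q,\Sigma,t,o)$ with $Q$ a finite set of states, $\Sigma$ a finite alphabet, $t:Q\times\Sigma\to Q$ and $o:Q\times\Sigma\to\Sigma$. Each state $q$ induces $q:\Sigma^*\to\Sigma^*$ by $q(\emptyset)=\emptyset$, $q(\sigma w)=o(q,\sigma)\,q'(w)$ with $q'=t(q,\sigma)$. An automaton semigroup is the semigroup of maps generated under composition by the states of a synchronous automaton. *)

theory Defs
  imports Main
begin

text \<open>A synchronous automaton with finite state set Q = UNIV :: 'q and finite alphabet
  Sigma = UNIV :: 's, transition function t and output function out.\<close>

fun state_map :: "('q \<Rightarrow> 's \<Rightarrow> 'q) \<Rightarrow> ('q \<Rightarrow> 's \<Rightarrow> 's) \<Rightarrow> 'q \<Rightarrow> 's list \<Rightarrow> 's list" where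
  "state_map t out q [] = []"
| "state_map t out q (s # w) = out q s # state_map t out (t q s) w"

inductive_set aut_semigroup :: "('q \<Rightarrow> 's \<Rightarrow> 'q) \<Rightarrow> ('q \<Rightarrow> 's \<Rightarrow> 's) \<Rightarrow> ('s list \<Rightarrow> 's list) set"
  for t out where
  gen: "state_map t out q \<in> aut_semigroup t out"
| comp: "f \<in> aut_semigroup t out \<Longrightarrow> g \<in> aut_semigroup t out \<Longrightarrow> f \<circ> g \<in> aut_semigroup t out"

text \<open>The free semigroup of rank 1 with a zero adjoined, i.e. the semigroup
  presented by a, b with b^2 = b, ab = ba = b. Normal forms: Some n stands for a^n (n \<ge> 1),
  None stands for the zero b.\<close>

definition fz_carrier :: "nat option set" where
  "fz_carrier = {None} \<union> {Some n | n. n \<ge> 1}"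

fun fz_mult :: "nat option \<Rightarrow> nat option \<Rightarrow> nat option" where
  "fz_mult (Some m) (Some n) = Some (m + n)"
| "fz_mult _ _ = None"

end

theory Submission
  imports Defs
begin

(*
  Suppose h were an isomorphism from the free monogenic semigroup with zero,
  {a^n | n \<ge> 1} \<union> {0}, onto the semigroup S generated by the states of a finite
  synchronous automaton.  Every map in S sends a letter-prefixed word s#u to
  c # g u, and we track the "sections" g.

  An abstract pumping
  lemma then shows: if all sections of a word map f lie in {f, z} for a zero z
  of f, then f^n is determined by the pair (b^n, {b^i | i < n}), where b is the
  letter map of f; over a finite alphabet this pair ranges over a finite set,
  so f^n = f^m for some 1 \<le> n < m.

  For the isomorphism h: a = h(a) is a state (it is indecomposable), the sections
  of h(a^n) lie in h({0} \<union> {a^e | e \<ge> n}), and among the finitely many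
  exponents e with h(a^e) a state we take the largest, M.  The sections of the
  state h(a^M) then lie in {h(a^M), h(0)}, so the pumping lemma gives
  h(a^(M n)) = h(a^M)^n = h(a^M)^m = h(a^(M m)) with n < m, contradicting
  injectivity of h.
*)

section \<open>Sections of word maps\<close>

definition sections_in :: "('s list \<Rightarrow> 's list) \<Rightarrow> ('s list \<Rightarrow> 's list) set \<Rightarrow> bool" where
  "sections_in f T \<longleftrightarrow> (\<forall>s. \<exists>c. \<exists>g\<in>T. \<forall>u. f (s # u) = c # g u)"

lemma sections_in_mono: "sections_in f T \<Longrightarrow> T \<subseteq> T' \<Longrightarrow> sections_in f T'"
  unfolding sections_in_def by blast

lemma sections_in_state: "sections_in (state_map t out q) (range (state_map t out))"
  unfolding sections_in_def by auto

lemma sections_in_comp: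
  assumes "sections_in f A" and "sections_in g B"
  shows "sections_in (f \<circ> g) {a \<circ> b | a b. a \<in> A \<and> b \<in> B}"
  unfolding sections_in_def
proof
  fix s
  obtain c b where "b \<in> B" and g: "\<forall>u. g (s # u) = c # b u"
    using assms(2) unfolding sections_in_def by blast
  moreover obtain d a where "a \<in> A" and f: "\<forall>v. f (c # v) = d # a v"
    using assms(1) unfolding sections_in_def by blast
  ultimately show "\<exists>d. \<exists>k\<in>{a \<circ> b | a b. a \<in> A \<and> b \<in> B}. \<forall>u. (f \<circ> g) (s # u) = d # k u"
    by (intro exI[of _ d] bexI[of _ "a \<circ> b"]) auto
qed

lemma aut_semigroup_Nil: "f \<in> aut_semigroup t out \<Longrightarrow> f [] = []"
  by (induction rule: aut_semigroup.induct) auto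

lemma indecomposable_is_state:
  assumes "f \<in> aut_semigroup t out"
    and "\<And>g k. g \<in> aut_semigroup t out \<Longrightarrow> k \<in> aut_semigroup t out \<Longrightarrow> f \<noteq> g \<circ> k"
  shows "f \<in> range (state_map t out)"
  using assms by (cases rule: aut_semigroup.cases) auto

section \<open>A pumping lemma for maps with sections in {f, z}\<close>

lemma iterate_on_cons:
  assumes step: "\<And>c v. f (c # v) = b c # (if c \<in> K then z v else f v)"
    and zf: "z \<circ> f = z" and fz: "f \<circ> z = z" and zz: "z \<circ> z = z"
  shows "(f^^n) (s # u) = (b^^n) s # (if \<exists>i<n. (b^^i) s \<in> K then z u else (f^^n) u)"
proof (induction n)
  case 0
  show ?case by simp
next
  case (Suc n)
  have "z (f v) = z v" for v
    using fun_cong[OF zf] by simp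
  then have z_fn: "z ((f^^n) v) = z v" for v
    by (induction n) simp_all
  have "(f^^Suc n) (s # u) = f ((b^^n) s # (if \<exists>i<n. (b^^i) s \<in> K then z u else (f^^n) u))"
    using Suc.IH by simp
  also have "\<dots> = (b^^Suc n) s # (if \<exists>i<Suc n. (b^^i) s \<in> K then z u else (f^^Suc n) u)"
    using fun_cong[OF fz] fun_cong[OF zz] z_fn by (auto simp: step less_Suc_eq)
  finally show ?case .
qed

lemma iterate_determined:
  assumes step: "\<And>c v. f (c # v) = b c # (if c \<in> K then z v else f v)"
    and "z \<circ> f = z" and "f \<circ> z = z" and "z \<circ> z = z"
    and f_Nil: "f [] = []" and b_eq: "b^^n = b^^m"
    and earlier_eq: "(\<lambda>i. b^^i) ` {..<n} = (\<lambda>i. b^^i) ` {..<m}"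
  shows "f^^n = f^^m"
proof
  have nil: "(f^^k) [] = []" for k
    using f_Nil by (induction k) simp_all
  fix w
  show "(f^^n) w = (f^^m) w"
  proof (induction w)
    case Nil
    show ?case by (simp add: nil)
  next
    case (Cons s u)
    have same_zero: "(\<exists>i<n. (b^^i) s \<in> K) \<longleftrightarrow> (\<exists>i<m. (b^^i) s \<in> K)"
      using earlier_eq by (auto simp: set_eq_iff image_iff) (metis lessThan_iff)+
    have "(f^^n) (s # u) = (b^^n) s # (if \<exists>i<n. (b^^i) s \<in> K then z u else (f^^n) u)"
      by (rule iterate_on_cons[OF assms(1-4)])
    also have "\<dots> = (b^^m) s # (if \<exists>i<m. (b^^i) s \<in> K then z u else (f^^m) u)"
      by (simp only: same_zero b_eq Cons)
    also have "\<dots> = (f^^m) (s # u)"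
      by (rule iterate_on_cons[OF assms(1-4), symmetric])
    finally show ?case .
  qed
qed

text \<open>Over a finite alphabet the pairs (b^n, {b^i | i < n}) range over a finite set,
  so a map whose sections lie in {f, z}, with z a zero of f, has a repetition among
  its powers.\<close>

lemma powers_repeat:
  fixes f z :: "'s::finite list \<Rightarrow> 's list"
  assumes sec: "sections_in f {f, z}" and f_Nil: "f [] = []"
    and "z \<circ> f = z" and "f \<circ> z = z" and "z \<circ> z = z"
  shows "\<exists>n m. 1 \<le> n \<and> n < m \<and> f^^n = f^^m"
proof -
  have "\<forall>s. \<exists>p. snd p \<in> {f, z} \<and> (\<forall>u. f (s # u) = fst p # snd p u)"
    using sec unfolding sections_in_def by fastforce
  then obtain p where p: "\<And>s. snd (p s) \<in> {f, z}" "\<And>s u. f (s # u) = fst (p s) # snd (p s) u"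
    using choice[of "\<lambda>s p. snd p \<in> {f, z} \<and> (\<forall>u. f (s # u) = fst p # snd p u)"] by blast
  define b where "b s = fst (p s)" for s
  define g where "g s = snd (p s)" for s
  have bg: "g s \<in> {f, z}" "f (s # u) = b s # g s u" for s u
    using p by (simp_all add: b_def g_def)
  define K where "K = {s. g s = z}"
  have step: "f (c # v) = b c # (if c \<in> K then z v else f v)" for c v
  proof (cases "c \<in> K")
    case True
    then show ?thesis by (simp add: bg(2) K_def)
  next
    case False
    then have "g c = f" using bg(1)[of c] by (auto simp: K_def)
    with False show ?thesis by (simp add: bg(2))
  qed
  define key where "key n = (b^^n, (\<lambda>i. b^^i) ` {..<n})" for n :: nat
  have "finite (key ` {1..})"
    by (rule finite_subset[of _ UNIV]) simp_all
  moreover have "infinite {1::nat..}"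
    by (simp add: infinite_Ici)
  ultimately have "\<not> inj_on key {1..}"
    using finite_imageD by blast
  then obtain n m where nm: "1 \<le> n" "n < m" "key n = key m"
  proof -
    obtain n' m' where "1 \<le> n'" "1 \<le> m'" "n' \<noteq> m'" "key n' = key m'"
      using \<open>\<not> inj_on key {1..}\<close> unfolding inj_on_def by auto
    then show ?thesis
      using that[of n' m'] that[of m' n'] by (metis linorder_neqE_nat)
  qed
  then have "b^^n = b^^m" "(\<lambda>i. b^^i) ` {..<n} = (\<lambda>i. b^^i) ` {..<m}"
    by (simp_all add: key_def)
  then have "f^^n = f^^m"
    by (rule iterate_determined[OF step assms(3-5) f_Nil])
  with nm show ?thesis by blast
qed

section \<open>The free monogenic semigroup with zero\<close>

definition fz_above :: "nat \<Rightarrow> nat option set" where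
  "fz_above n = insert None (Some ` {n..})"

lemma fz_carrier_eq: "fz_carrier = fz_above 1"
  by (auto simp: fz_carrier_def fz_above_def)

lemma fz_above_subset: "1 \<le> n \<Longrightarrow> fz_above n \<subseteq> fz_carrier"
  by (auto simp: fz_carrier_eq fz_above_def)

lemma fz_mult_above:
  "x \<in> fz_above 1 \<Longrightarrow> y \<in> fz_above n \<Longrightarrow> fz_mult x y \<in> fz_above (Suc n)"
  by (auto simp: fz_above_def)

lemma fz_generator_indecomposable:
  "x \<in> fz_carrier \<Longrightarrow> y \<in> fz_carrier \<Longrightarrow> fz_mult x y \<noteq> Some 1"
  by (cases x; cases y) (auto simp: fz_carrier_def)

locale fz_iso =
  fixes t :: "'q::finite \<Rightarrow> 's::finite \<Rightarrow> 'q" and out :: "'q \<Rightarrow> 's \<Rightarrow> 's"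
    and h :: "nat option \<Rightarrow> 's list \<Rightarrow> 's list"
  assumes bij: "bij_betw h fz_carrier (aut_semigroup t out)"
    and hom: "\<forall>x\<in>fz_carrier. \<forall>y\<in>fz_carrier. h (fz_mult x y) = h x \<circ> h y"
begin

lemma h_mult: "x \<in> fz_carrier \<Longrightarrow> y \<in> fz_carrier \<Longrightarrow> h (fz_mult x y) = h x \<circ> h y"
  using hom by blast

lemma h_inj: "x \<in> fz_carrier \<Longrightarrow> y \<in> fz_carrier \<Longrightarrow> h x = h y \<Longrightarrow> x = y"
  using bij unfolding bij_betw_def inj_on_def by blast

lemma h_image: "h ` fz_carrier = aut_semigroup t out"
  using bij unfolding bij_betw_def by blast

lemma h_zero_left: "x \<in> fz_carrier \<Longrightarrow> h None \<circ> h x = h None"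
  using h_mult[of None x] by (simp add: fz_carrier_def)

lemma h_zero_right: "x \<in> fz_carrier \<Longrightarrow> h x \<circ> h None = h None"
  using h_mult[of x None] by (cases x) (simp_all add: fz_carrier_def)

lemma h_power:
  assumes "1 \<le> k"
  shows "1 \<le> n \<Longrightarrow> h (Some (k * n)) = h (Some k) ^^ n"
proof (induction n rule: nat_induct_at_least)
  case base
  show ?case by simp
next
  case (Suc n)
  have "h (Some (k * Suc n)) = h (Some k) \<circ> h (Some (k * n))"
    using h_mult[of "Some k" "Some (k * n)"] assms Suc by (simp add: fz_carrier_def)
  with Suc show ?case by (simp add: funpow_swap1)
qed

lemma generator_is_state: "h (Some 1) \<in> range (state_map t out)"
proof (rule indecomposable_is_state)
  show "h (Some 1) \<in> aut_semigroup t out"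
    using h_image by (auto simp: fz_carrier_def)
  fix g k
  assume "g \<in> aut_semigroup t out" "k \<in> aut_semigroup t out"
  then obtain x y where xy: "x \<in> fz_carrier" "y \<in> fz_carrier" "g = h x" "k = h y"
    using h_image by blast
  show "h (Some 1) \<noteq> g \<circ> k"
  proof
    assume "h (Some 1) = g \<circ> k"
    then have "h (Some 1) = h (fz_mult x y)"
      using xy h_mult by simp
    moreover have "fz_mult x y \<in> fz_carrier" "Some 1 \<in> fz_carrier"
      using xy by (cases x; cases y; auto simp: fz_carrier_def)+
    ultimately have "fz_mult x y = Some 1"
      using h_inj by metis
    with xy show False
      using fz_generator_indecomposable by blast
  qed
qed

text \<open>Sections of the image of a^n are images of 0 or of powers a^e with e \<ge> n;
  for n = 1 this holds because the image of a is a state.\<close>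

lemma generator_sections: "sections_in (h (Some 1)) (h ` fz_above 1)"
proof -
  obtain q where q: "h (Some 1) = state_map t out q"
    using generator_is_state by blast
  have "range (state_map t out) \<subseteq> h ` fz_above 1"
    using h_image by (auto simp: fz_carrier_eq intro: aut_semigroup.gen)
  with sections_in_state show ?thesis
    unfolding q by (rule sections_in_mono)
qed

lemma power_sections: "1 \<le> n \<Longrightarrow> sections_in (h (Some n)) (h ` fz_above n)"
proof (induction n rule: nat_induct_at_least)
  case base
  show ?case by (rule generator_sections)
next
  case (Suc n)
  have split: "h (Some (Suc n)) = h (Some 1) \<circ> h (Some n)"
    using h_mult[of "Some 1" "Some n"] Suc.hyps by (simp add: fz_carrier_def)
  have products: "{a \<circ> b | a b. a \<in> h ` fz_above 1 \<and> b \<in> h ` fz_above n} \<subseteq> h ` fz_above (Suc n)"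
  proof clarify
    fix x y
    assume "x \<in> fz_above 1" "y \<in> fz_above n"
    moreover have "x \<in> fz_carrier" "y \<in> fz_carrier"
      using calculation fz_above_subset Suc.hyps by (auto simp: fz_carrier_eq)
    ultimately show "h x \<circ> h y \<in> h ` fz_above (Suc n)"
      using h_mult fz_mult_above by (metis image_eqI)
  qed
  show ?case
    unfolding split by (rule sections_in_mono[OF sections_in_comp[OF generator_sections Suc.IH] products])
qed

text \<open>Only finitely many powers of a are mapped to states, since h is injective and
  there are finitely many states; take the largest one, a^M.\<close>

lemma maximal_state_power:
  obtains M q where "1 \<le> M" "state_map t out q = h (Some M)"
    "\<And>e. M < e \<Longrightarrow> h (Some e) \<notin> range (state_map t out)"
proof -
  define E where "E = {e. 1 \<le> e \<and> h (Some e) \<in> range (state_map t out)}"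
  have "inj_on (\<lambda>e. h (Some e)) E"
    using h_inj unfolding inj_on_def E_def fz_carrier_def by blast
  moreover have "(\<lambda>e. h (Some e)) ` E \<subseteq> range (state_map t out)"
    by (auto simp: E_def)
  ultimately have "finite E"
    by (rule inj_on_finite) simp
  moreover have "1 \<in> E"
    using generator_is_state by (simp add: E_def)
  ultimately have M_in: "Max E \<in> E" and M_max: "\<And>e. e \<in> E \<Longrightarrow> e \<le> Max E"
    using Max_in Max_ge by blast+
  then obtain q where "1 \<le> Max E" "state_map t out q = h (Some (Max E))"
    unfolding E_def by auto
  moreover have "h (Some e) \<notin> range (state_map t out)" if "Max E < e" for e
    using M_max[of e] that \<open>1 \<le> Max E\<close> unfolding E_def by auto
  ultimately show ?thesis
    by (rule that)
qed

text \<open>The sections of the state h(a^M) are states of the form h(0) or h(a^e) with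
  e \<ge> M, hence by maximality only h(0) and h(a^M) itself.\<close>

lemma maximal_state_sections:
  assumes M: "1 \<le> M" and q: "state_map t out q = h (Some M)"
    and maximal: "\<And>e. M < e \<Longrightarrow> h (Some e) \<notin> range (state_map t out)"
  shows "sections_in (h (Some M)) {h (Some M), h None}"
  unfolding sections_in_def
proof
  fix s
  obtain c g where g: "g \<in> h ` fz_above M" "\<forall>u. h (Some M) (s # u) = c # g u"
    using power_sections[OF M] unfolding sections_in_def by blast
  have "state_map t out (t q s) u = g u" for u
    using g(2) q[symmetric] by (metis list.inject state_map.simps(2))
  then have g_state: "g \<in> range (state_map t out)"
    by (metis ext rangeI)
  obtain x where x: "x \<in> fz_above M" "g = h x"
    using g(1) by blast
  have "g \<in> {h (Some M), h None}"
  proof (cases x)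
    case (Some e)
    then have "M \<le> e" "h (Some e) \<in> range (state_map t out)"
      using x g_state by (auto simp: fz_above_def)
    then have "e = M"
      using maximal by (metis le_neq_implies_less)
    then show ?thesis
      using x Some by simp
  qed (use x in simp)
  with g(2) show "\<exists>c. \<exists>g\<in>{h (Some M), h None}. \<forall>u. h (Some M) (s # u) = c # g u"
    by blast
qed

text \<open>The pumping lemma applied to h(a^M) with zero h(0) produces equal powers
  h(a^M)^n = h(a^M)^m with n < m, i.e. h(a^(M n)) = h(a^(M m)), contradicting injectivity.\<close>

theorem no_isomorphism: False
proof -
  obtain M q where M: "1 \<le> M" and q: "state_map t out q = h (Some M)"
    and maximal: "\<And>e. M < e \<Longrightarrow> h (Some e) \<notin> range (state_map t out)"
    using maximal_state_power by blast
  have carrier: "Some M \<in> fz_carrier" "None \<in> fz_carrier"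
    using M by (auto simp: fz_carrier_def)
  have "h (Some M) [] = []"
    using aut_semigroup_Nil h_image carrier by blast
  then obtain n m where nm: "1 \<le> n" "n < m" "h (Some M) ^^ n = h (Some M) ^^ m"
    using powers_repeat[OF maximal_state_sections[OF M q maximal]]
      h_zero_left h_zero_right carrier by metis
  then have "h (Some (M * n)) = h (Some (M * m))"
    using h_power M by simp
  moreover have "Some (M * n) \<in> fz_carrier" "Some (M * m) \<in> fz_carrier"
    using M nm by (simp_all add: fz_carrier_def)
  ultimately have "M * n = M * m"
    using h_inj by blast
  with M nm show False
    by simp
qed

end

theorem mainTheorem14:
  fixes t :: "'q::finite \<Rightarrow> 's::finite \<Rightarrow> 'q" and out :: "'q \<Rightarrow> 's \<Rightarrow> 's"
  shows "\<not> (\<exists>h. bij_betw h fz_carrier (aut_semigroup t out) \<and>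
              (\<forall>x\<in>fz_carrier. \<forall>y\<in>fz_carrier. h (fz_mult x y) = h x \<circ> h y))"
proof
  assume "\<exists>h. bij_betw h fz_carrier (aut_semigroup t out) \<and>
              (\<forall>x\<in>fz_carrier. \<forall>y\<in>fz_carrier. h (fz_mult x y) = h x \<circ> h y)"
  then obtain h where "fz_iso t out h"
    unfolding fz_iso_def by blast
  then show False
    by (rule fz_iso.no_isomorphism)
qed

end
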